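(* Let $T$ be a tree on $n$ vertices with distance matrix $D$ and degree vector $d$. Then $d^\top D d = 4\mathbf{1}^\top D\mathbf{1} - 2(n-1)(2n-1)$.
   Context: $\mathbf{1}$ denotes the all-ones vector of length $n$; the distance matrix $D$ has $(a,b)$ entry equal to the graph distance between vertices $a$ and $b$ of $T$; $d$ is the vector whose $a$-th entry is the degree of vertex $a$. *)

theory Defs
  imports Main
begin

definition simple_graph :: "'a set \<Rightarrow> ('a \<Rightarrow> 'a \<Rightarrow> bool) \<Rightarrow> bool" where
  "simple_graph V E \<longleftrightarrow> finite V \<and>
     (\<forall>u v. E u v \<longrightarrow> u \<in> V \<and> v \<in> V) \<and>
     (\<forall>u v. E u v \<longrightarrow> E v u) \<and> (\<forall>v. \<not> E v v)"

definition walk :: "'a set \<Rightarrow> ('a \<Rightarrow> 'a \<Rightarrow> bool) \<Rightarrow> 'a list \<Rightarrow> bool" where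
  "walk V E ps \<longleftrightarrow> ps \<noteq> [] \<and> set ps \<subseteq> V \<and>
     (\<forall>i. Suc i < length ps \<longrightarrow> E (ps ! i) (ps ! Suc i))"

definition connected_graph :: "'a set \<Rightarrow> ('a \<Rightarrow> 'a \<Rightarrow> bool) \<Rightarrow> bool" where
  "connected_graph V E \<longleftrightarrow>
     (\<forall>u\<in>V. \<forall>v\<in>V. \<exists>ps. walk V E ps \<and> hd ps = u \<and> last ps = v)"

definition has_cycle :: "'a set \<Rightarrow> ('a \<Rightarrow> 'a \<Rightarrow> bool) \<Rightarrow> bool" where
  "has_cycle V E \<longleftrightarrow> (\<exists>ps. walk V E ps \<and> distinct ps \<and> length ps \<ge> 3 \<and> E (last ps) (hd ps))"

definition is_tree :: "'a set \<Rightarrow> ('a \<Rightarrow> 'a \<Rightarrow> bool) \<Rightarrow> bool" where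
  "is_tree V E \<longleftrightarrow> simple_graph V E \<and> V \<noteq> {} \<and> connected_graph V E \<and> \<not> has_cycle V E"

definition gdist :: "'a set \<Rightarrow> ('a \<Rightarrow> 'a \<Rightarrow> bool) \<Rightarrow> 'a \<Rightarrow> 'a \<Rightarrow> nat" where
  "gdist V E u v = (LEAST k. \<exists>ps. walk V E ps \<and> hd ps = u \<and> last ps = v \<and> length ps = Suc k)"

definition degree :: "'a set \<Rightarrow> ('a \<Rightarrow> 'a \<Rightarrow> bool) \<Rightarrow> 'a \<Rightarrow> nat" where
  "degree V E v = card {u\<in>V. E v u}"

end

theory Submission
  imports Defs
begin

(*
  Root the tree at a vertex a and write d for the distance from a. Along every edge d changes
  by exactly one, and every vertex other than a has exactly one neighbour closer to a: otherwise
  two geodesics from a, joined above their common level, would close up to a cycle. Counting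
  g (d c) over all adjacent pairs (b, c) once from the side of b and once from the side of c
  therefore gives, for every g, a summation by parts identity. For g x = x it yields
  sum of degrees = 2 (n - 1); for g x = x^2 it yields
  sum_b deg b * d(a, b) = 2 * sum_b d(a, b) - (n - 1).
  Multiplying by deg a, summing over a and using the symmetry of D gives the theorem.
*)

lemma walk_Nil [simp]: "\<not> walk V E []"
  by (simp add: walk_def)

lemma walk_single [simp]: "walk V E [x] \<longleftrightarrow> x \<in> V"
  by (simp add: walk_def)

lemma walk_Cons_Cons [simp]:
  "walk V E (x # y # ys) \<longleftrightarrow> x \<in> V \<and> E x y \<and> walk V E (y # ys)"
proof -
  have "(\<forall>i. Suc i < length (x # y # ys) \<longrightarrow> E ((x # y # ys) ! i) ((x # y # ys) ! Suc i))
      \<longleftrightarrow> E x y \<and> (\<forall>i. Suc i < length (y # ys) \<longrightarrow> E ((y # ys) ! i) ((y # ys) ! Suc i))"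
    (is "?l \<longleftrightarrow> ?r")
  proof
    assume ?l
    then show ?r
      by (metis Suc_less_eq length_Cons nth_Cons_0 nth_Cons_Suc zero_less_Suc)
  next
    assume ?r
    then show ?l
      by (auto simp: nth_Cons split: nat.split)
  qed
  then show ?thesis
    unfolding walk_def by auto
qed

lemma walk_append:
  assumes "xs \<noteq> []" "ys \<noteq> []"
  shows "walk V E (xs @ ys) \<longleftrightarrow> walk V E xs \<and> walk V E ys \<and> E (last xs) (hd ys)"
  using assms
proof (induction xs rule: induct_list012)
  case (2 x)
  then show ?case by (cases ys) auto
next
  case (3 x y zs)
  then show ?case by auto
qed simp

lemma walk_join:
  assumes "walk V E xs" "walk V E ys" "last xs = hd ys"
  shows "walk V E (xs @ tl ys)"
proof -
  have "xs \<noteq> []"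
    using assms(1) by auto
  then show ?thesis
    using assms by (cases ys; cases "tl ys") (auto simp: walk_append)
qed

lemma walk_splice:
  assumes "walk V E xs" "walk V E (last xs # zs @ [hd ys])" "walk V E ys"
  shows "walk V E (xs @ zs @ ys)"
proof -
  have "walk V E (xs @ zs @ [hd ys])"
    using walk_join[OF assms(1,2)] by simp
  then have "walk V E ((xs @ zs @ [hd ys]) @ tl ys)"
    using assms(3) by (intro walk_join) auto
  moreover have "ys \<noteq> []"
    using assms(3) by auto
  ultimately show ?thesis
    by simp
qed

lemma walk_rev:
  assumes "\<And>u v. E u v \<Longrightarrow> E v u"
  shows "walk V E (rev xs) \<longleftrightarrow> walk V E xs"
proof (induction xs rule: induct_list012)
  case (3 x y zs)
  have "walk V E (rev (y # zs) @ [x]) \<longleftrightarrow> walk V E (rev (y # zs)) \<and> x \<in> V \<and> E y x"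
    by (subst walk_append) auto
  then show ?case
    using "3.IH" assms by auto
qed simp_all

lemma walk_take: "walk V E xs \<Longrightarrow> 0 < k \<Longrightarrow> walk V E (take k xs)"
  by (auto simp: walk_def dest: in_set_takeD)

lemma walk_drop: "walk V E xs \<Longrightarrow> k < length xs \<Longrightarrow> walk V E (drop k xs)"
  by (auto simp: walk_def dest: in_set_dropD)

lemma gdist_less_length:
  assumes "walk V E ps"
  shows "gdist V E (hd ps) (last ps) < length ps"
proof -
  have "length ps = Suc (length ps - 1)"
    using assms by (cases ps) auto
  then have "gdist V E (hd ps) (last ps) \<le> length ps - 1"
    unfolding gdist_def using assms by (intro Least_le) metis
  then show ?thesis
    using assms by (cases ps) auto
qed

definition geodesic :: "'a set \<Rightarrow> ('a \<Rightarrow> 'a \<Rightarrow> bool) \<Rightarrow> 'a list \<Rightarrow> bool" where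
  "geodesic V E ps \<longleftrightarrow> walk V E ps \<and> length ps = Suc (gdist V E (hd ps) (last ps))"

lemma geodesic_exists:
  assumes "walk V E ps"
  obtains qs where "geodesic V E qs" "hd qs = hd ps" "last qs = last ps"
proof -
  have "length ps = Suc (length ps - 1)"
    using assms by (cases ps) auto
  then have "\<exists>k qs. walk V E qs \<and> hd qs = hd ps \<and> last qs = last ps \<and> length qs = Suc k"
    using assms by blast
  from LeastI_ex[OF this] show ?thesis
    using that unfolding gdist_def geodesic_def by fastforce
qed

lemma gdist_triangle:
  assumes "walk V E ps" "walk V E qs" "last ps = hd qs"
  shows "gdist V E (hd ps) (last qs) \<le> gdist V E (hd ps) (last ps) + gdist V E (hd qs) (last qs)"
proof -
  obtain P where P: "geodesic V E P" "hd P = hd ps" "last P = last ps"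
    using geodesic_exists[OF assms(1)] .
  obtain Q where Q: "geodesic V E Q" "hd Q = hd qs" "last Q = last qs"
    using geodesic_exists[OF assms(2)] .
  have "P \<noteq> []" "Q \<noteq> []"
    using P Q by (auto simp: geodesic_def)
  then have "hd (P @ tl Q) = hd ps" "last (P @ tl Q) = last qs"
    using P Q assms(3) by (simp, cases Q, auto split: if_splits)
  moreover have "walk V E (P @ tl Q)"
    using P Q assms(3) by (intro walk_join) (auto simp: geodesic_def)
  ultimately have "gdist V E (hd ps) (last qs) < length (P @ tl Q)"
    using gdist_less_length by metis
  then show ?thesis
    using P Q \<open>Q \<noteq> []\<close> by (simp add: geodesic_def)
qed

lemma gdist_self: "x \<in> V \<Longrightarrow> gdist V E x x = 0"
  using gdist_less_length[of V E "[x]"] by simp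

lemma gdist_sym:
  assumes "\<And>u v. E u v \<Longrightarrow> E v u"
  shows "gdist V E u v = gdist V E v u"
proof -
  have reverse: "\<exists>qs. walk V E qs \<and> hd qs = v \<and> last qs = u \<and> length qs = Suc k"
    if "\<exists>ps. walk V E ps \<and> hd ps = u \<and> last ps = v \<and> length ps = Suc k" for u v k
    using that walk_rev[of E V, OF assms] by (metis hd_rev last_rev length_rev)
  have "(\<exists>ps. walk V E ps \<and> hd ps = u \<and> last ps = v \<and> length ps = Suc k)
      \<longleftrightarrow> (\<exists>ps. walk V E ps \<and> hd ps = v \<and> last ps = u \<and> length ps = Suc k)" for k
    using reverse by blast
  then show ?thesis
    unfolding gdist_def by simp
qed

lemma geodesic_nth_gdist:
  assumes "geodesic V E P" "i < length P"
  shows "gdist V E (hd P) (P ! i) = i"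
proof -
  have P: "walk V E P" "length P = Suc (gdist V E (hd P) (last P))"
    using assms(1) by (auto simp: geodesic_def)
  have "last (take (Suc i) P) = P ! i"
    using assms(2) by (simp add: take_Suc_conv_app_nth)
  moreover have "hd (take (Suc i) P) = hd P"
    using P(1) by (cases P) auto
  ultimately have prefix: "walk V E (take (Suc i) P)" "hd (take (Suc i) P) = hd P"
    "last (take (Suc i) P) = P ! i" "length (take (Suc i) P) = Suc i"
    using P(1) assms(2) by (simp_all add: walk_take)
  have suffix: "walk V E (drop i P)" "hd (drop i P) = P ! i" "last (drop i P) = last P"
    "length (drop i P) = length P - i"
    using P assms(2) by (auto simp: walk_drop hd_drop_conv_nth)
  have "gdist V E (hd P) (P ! i) \<le> i"
    using gdist_less_length[OF prefix(1)] prefix by simp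
  moreover have "gdist V E (hd P) (last P) \<le> gdist V E (hd P) (P ! i) + (length P - i - 1)"
    using gdist_triangle[OF prefix(1) suffix(1)] gdist_less_length[OF suffix(1)] prefix suffix
    by fastforce
  ultimately show ?thesis
    using P assms(2) by linarith
qed

lemma geodesic_distinct: "geodesic V E P \<Longrightarrow> distinct P"
  unfolding distinct_conv_nth by (metis geodesic_nth_gdist)

lemma geodesic_gdist_less:
  "geodesic V E P \<Longrightarrow> v \<in> set P \<Longrightarrow> gdist V E (hd P) v < length P"
  by (metis geodesic_nth_gdist in_set_conv_nth)

lemma geodesics_fork:
  assumes P: "geodesic V E P" and Q: "geodesic V E Q"
    and "hd P = hd Q" "length P = length Q" "last P \<noteq> last Q"
  obtains m where "Suc m < length P" "P ! m = Q ! m"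
    "set (drop m P) \<inter> set (drop (Suc m) Q) = {}"
proof -
  define S where "S = {i. i < length P \<and> P ! i = Q ! i}"
  define m where "m = Max S"
  have ne: "P \<noteq> []" "Q \<noteq> []"
    using P Q by (auto simp: geodesic_def)
  then have "0 \<in> S"
    using assms(3) by (simp add: S_def hd_conv_nth)
  moreover have "finite S"
    by (simp add: S_def)
  ultimately have "m \<in> S" and m_max: "\<And>i. i \<in> S \<Longrightarrow> i \<le> m"
    unfolding m_def using Max_in by auto
  moreover have "m \<noteq> length P - 1"
    using \<open>m \<in> S\<close> ne assms(4,5) by (auto simp: S_def last_conv_nth)
  ultimately have "Suc m < length P" "P ! m = Q ! m"
    unfolding S_def by auto
  moreover have "set (drop m P) \<inter> set (drop (Suc m) Q) = {}"
  proof (rule ccontr)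
    assume "set (drop m P) \<inter> set (drop (Suc m) Q) \<noteq> {}"
    then obtain i j where ij: "i < length P - m" "j < length Q - Suc m" "P ! (m + i) = Q ! (Suc m + j)"
      by (auto simp: in_set_conv_nth) metis
    then have "m + i = Suc m + j"
      using geodesic_nth_gdist[OF P, of "m + i"] geodesic_nth_gdist[OF Q, of "Suc m + j"] assms(3)
      by auto
    then have "Suc m + j \<in> S"
      using ij assms(4) by (simp add: S_def)
    then show False
      using m_max by fastforce
  qed
  ultimately show ?thesis
    using that by blast
qed

lemma has_cycle_of_geodesics:
  assumes sym: "\<And>u v. E u v \<Longrightarrow> E v u"
    and P: "geodesic V E P" and Q: "geodesic V E Q"
    and PQ: "hd P = hd Q" "length P = length Q" "last P \<noteq> last Q"
    and M: "walk V E (last P # M @ [last Q])" "distinct M"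
      "\<forall>v\<in>set M. length P \<le> gdist V E (hd P) v"
  shows "has_cycle V E"
proof -
  obtain m where m: "Suc m < length P" "P ! m = Q ! m"
    and disj: "set (drop m P) \<inter> set (drop (Suc m) Q) = {}"
    using geodesics_fork[OF P Q PQ] .
  define A where "A = drop m P"
  define B where "B = rev (drop (Suc m) Q)"
  have walks: "walk V E P" "walk V E Q"
    using P Q by (auto simp: geodesic_def)
  have A: "walk V E A" "hd A = Q ! m" "last A = last P" "length A = length P - m"
    using walks m by (auto simp: A_def walk_drop hd_drop_conv_nth)
  have B: "walk V E B" "hd B = last Q" "last B = Q ! Suc m" "length B = length P - Suc m"
    using walks m PQ by (auto simp: B_def walk_drop walk_rev[OF sym] hd_rev last_rev hd_drop_conv_nth)
  have "walk V E (A @ M @ B)"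
    using walk_splice[OF A(1) _ B(1)] A(3) B(2) M(1) by simp
  moreover have "distinct (A @ M @ B)"
  proof -
    have "\<forall>v\<in>set A \<union> set B. gdist V E (hd P) v < length P"
      using geodesic_gdist_less[OF P] geodesic_gdist_less[OF Q] PQ
      by (auto simp: A_def B_def dest: in_set_dropD)
    then have "set A \<inter> set M = {}" "set B \<inter> set M = {}"
      using M(3) by (meson UnCI disjoint_iff not_le)+
    moreover have "set A \<inter> set B = {}" "distinct A" "distinct B"
      using disj geodesic_distinct[OF P] geodesic_distinct[OF Q] by (simp_all add: A_def B_def)
    ultimately show ?thesis
      using M(2) by auto
  qed
  moreover have "E (last (A @ M @ B)) (hd (A @ M @ B))"
    using walks(2) m A B PQ sym by (auto simp: walk_def)
  moreover have "3 \<le> length (A @ M @ B)"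
    using A B m by simp
  ultimately show ?thesis
    unfolding has_cycle_def by blast
qed

lemma sum_neighbours_eq_degree:
  assumes "finite V" "\<And>u v. E u v \<Longrightarrow> E v u"
  shows "(\<Sum>b\<in>V. \<Sum>c\<in>{c\<in>V. E b c}. f c) = (\<Sum>c\<in>V. of_nat (degree V E c) * f c)"
proof -
  have "(\<Sum>b\<in>V. \<Sum>c\<in>{c\<in>V. E b c}. f c) = (\<Sum>b\<in>V. \<Sum>c\<in>V. if E b c then f c else 0)"
    using assms(1) by (simp add: sum.inter_filter)
  also have "\<dots> = (\<Sum>c\<in>V. \<Sum>b\<in>V. if E b c then f c else 0)"
    by (rule sum.swap)
  also have "\<dots> = (\<Sum>c\<in>V. of_nat (card {b\<in>V. E b c}) * f c)"
    using assms(1) by (simp add: sum.inter_filter[symmetric])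
  also have "\<dots> = (\<Sum>c\<in>V. of_nat (degree V E c) * f c)"
  proof -
    have "{b\<in>V. E b c} = {b\<in>V. E c b}" for c
      using assms(2) by blast
    then show ?thesis
      by (simp add: degree_def)
  qed
  finally show ?thesis .
qed

locale tree =
  fixes V :: "'a set" and E :: "'a \<Rightarrow> 'a \<Rightarrow> bool"
  assumes is_tree: "is_tree V E"
begin

lemma finite_vertices: "finite V"
  and edge_sym: "E u v \<Longrightarrow> E v u"
  and edge_irrefl: "\<not> E v v"
  and edge_vertices: "E u v \<Longrightarrow> u \<in> V \<and> v \<in> V"
  and acyclic: "\<not> has_cycle V E"
  and nonempty: "V \<noteq> {}"
  using is_tree by (auto simp: is_tree_def simple_graph_def)

lemma geodesic_between:
  assumes "u \<in> V" "v \<in> V"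
  obtains P where "geodesic V E P" "hd P = u" "last P = v"
  using is_tree assms geodesic_exists
  unfolding is_tree_def connected_graph_def by metis

lemma gdist_neighbour:
  assumes "a \<in> V" "E b c"
  shows "gdist V E a c = Suc (gdist V E a b) \<or> gdist V E a b = Suc (gdist V E a c)"
proof -
  have b: "b \<in> V" and c: "c \<in> V" and "b \<noteq> c"
    using edge_vertices edge_irrefl assms(2) by auto
  obtain P where P: "geodesic V E P" "hd P = a" "last P = b"
    using geodesic_between[OF assms(1) b] .
  obtain Q where Q: "geodesic V E Q" "hd Q = a" "last Q = c"
    using geodesic_between[OF assms(1) c] .
  have "gdist V E a c \<le> gdist V E a b + gdist V E b c" "gdist V E b c < 2"
    using gdist_triangle[of V E P "[b, c]"] gdist_less_length[of V E "[b, c]"] P b c assms(2)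
    by (auto simp: geodesic_def)
  moreover have "gdist V E a b \<le> gdist V E a c + gdist V E c b" "gdist V E c b < 2"
    using gdist_triangle[of V E Q "[c, b]"] gdist_less_length[of V E "[c, b]"] Q b c
      edge_sym[OF assms(2)] by (auto simp: geodesic_def)
  moreover have "gdist V E a c \<noteq> gdist V E a b"
  proof
    assume "gdist V E a c = gdist V E a b"
    then have "has_cycle V E"
      using has_cycle_of_geodesics[of E V P Q "[]"] edge_sym P Q b c \<open>b \<noteq> c\<close> assms(2)
      by (auto simp: geodesic_def)
    then show False
      using acyclic by contradiction
  qed
  ultimately show ?thesis
    by linarith
qed

lemma parent_unique:
  assumes "a \<in> V" "E b c" "E b c'"
    and "Suc (gdist V E a c) = gdist V E a b" "Suc (gdist V E a c') = gdist V E a b"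
  shows "c = c'"
proof (rule ccontr)
  assume "c \<noteq> c'"
  have "b \<in> V" "c \<in> V" "c' \<in> V"
    using edge_vertices assms(2,3) by auto
  obtain P where P: "geodesic V E P" "hd P = a" "last P = c"
    using geodesic_between[OF assms(1) \<open>c \<in> V\<close>] .
  obtain Q where Q: "geodesic V E Q" "hd Q = a" "last Q = c'"
    using geodesic_between[OF assms(1) \<open>c' \<in> V\<close>] .
  have "has_cycle V E"
    using has_cycle_of_geodesics[of E V P Q "[b]"] edge_sym P Q assms \<open>c \<noteq> c'\<close>
      \<open>b \<in> V\<close> \<open>c \<in> V\<close> \<open>c' \<in> V\<close>
    by (auto simp: geodesic_def)
  then show False
    using acyclic by contradiction
qed

lemma parent_exists:
  assumes "a \<in> V" "b \<in> V" "b \<noteq> a"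
  obtains c where "E b c" "Suc (gdist V E a c) = gdist V E a b"
proof -
  obtain P where P: "geodesic V E P" "hd P = a" "last P = b"
    using geodesic_between[OF assms(1,2)] .
  define L where "L = gdist V E a b"
  have len: "length P = Suc L"
    using P by (simp add: geodesic_def L_def)
  have "L \<noteq> 0"
    using P len assms(3) by (cases P) auto
  then obtain l where l: "L = Suc l"
    using not0_implies_Suc by blast
  then have "E (P ! l) b"
    using P len by (auto simp: geodesic_def walk_def last_conv_nth)
  moreover have "Suc (gdist V E a (P ! l)) = L"
    using geodesic_nth_gdist[OF P(1), of l] P len l by simp
  ultimately show ?thesis
    using that edge_sym L_def by blast
qed

lemma card_parents:
  assumes "a \<in> V" "b \<in> V"
  shows "card {c\<in>V. E b c \<and> Suc (gdist V E a c) = gdist V E a b} = (if b = a then 0 else 1)"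
proof (cases "b = a")
  case True
  then show ?thesis
    using gdist_self[OF assms(1)] by simp
next
  case False
  then obtain c where c: "E b c" "Suc (gdist V E a c) = gdist V E a b"
    using parent_exists assms by blast
  then have "{c\<in>V. E b c \<and> Suc (gdist V E a c) = gdist V E a b} = {c}"
    using parent_unique[OF assms(1)] edge_vertices by blast
  then show ?thesis
    using False by simp
qed

lemma sum_neighbours_level:
  fixes g :: "int \<Rightarrow> int"
  assumes "a \<in> V" "b \<in> V"
  defines "k \<equiv> int (gdist V E a b)"
  shows "(\<Sum>c\<in>{c\<in>V. E b c}. g (int (gdist V E a c)))
    = int (degree V E b) * g (k + 1) + (if b = a then 0 else g (k - 1) - g (k + 1))"
proof -
  let ?parent = "\<lambda>c. Suc (gdist V E a c) = gdist V E a b"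
  have "int (gdist V E a c) = (if ?parent c then k - 1 else k + 1)" if "E b c" for c
    using gdist_neighbour[OF assms(1) that] unfolding k_def by auto
  then have "g (int (gdist V E a c)) = g (k + 1) + (if ?parent c then g (k - 1) - g (k + 1) else 0)"
    if "E b c" for c
    using that by simp
  then have "(\<Sum>c\<in>{c\<in>V. E b c}. g (int (gdist V E a c)))
      = (\<Sum>c\<in>{c\<in>V. E b c}. g (k + 1) + (if ?parent c then g (k - 1) - g (k + 1) else 0))"
    by (intro sum.cong) auto
  also have "\<dots> = int (degree V E b) * g (k + 1)
      + int (card {c\<in>V. E b c \<and> ?parent c}) * (g (k - 1) - g (k + 1))"
    using finite_vertices by (simp add: sum.distrib sum.inter_filter[symmetric] degree_def conj_assoc)
  finally show ?thesis
    using card_parents[OF assms(1,2)] by simp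
qed

lemma sum_degree_level_diff:
  fixes g :: "int \<Rightarrow> int"
  assumes "a \<in> V"
  shows "(\<Sum>b\<in>V. int (degree V E b) * (g (int (gdist V E a b) + 1) - g (int (gdist V E a b))))
    = (\<Sum>b\<in>V - {a}. g (int (gdist V E a b) + 1) - g (int (gdist V E a b) - 1))"
proof -
  let ?here = "\<lambda>b. g (int (gdist V E a b))" and ?above = "\<lambda>b. g (int (gdist V E a b) + 1)"
    and ?below = "\<lambda>b. g (int (gdist V E a b) - 1)"
  have "(\<Sum>b\<in>V. int (degree V E b) * ?here b) = (\<Sum>b\<in>V. \<Sum>c\<in>{c\<in>V. E b c}. ?here c)"
    using sum_neighbours_eq_degree[of V E ?here, OF finite_vertices edge_sym] by simp
  also have "\<dots> = (\<Sum>b\<in>V. int (degree V E b) * ?above b + (if b = a then 0 else ?below b - ?above b))"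
    using sum_neighbours_level[OF assms, where g = g] by (intro sum.cong) auto
  also have "\<dots> = (\<Sum>b\<in>V. int (degree V E b) * ?above b) + (\<Sum>b\<in>V - {a}. ?below b - ?above b)"
    using finite_vertices by (simp add: sum.distrib sum.If_cases Diff_eq)
  finally show ?thesis
    by (simp add: right_diff_distrib sum_subtractf)
qed

lemma sum_degree: "(\<Sum>b\<in>V. int (degree V E b)) = 2 * (int (card V) - 1)"
proof -
  obtain a where a: "a \<in> V"
    using nonempty by blast
  moreover have "0 < card V"
    using a finite_vertices card_gt_0_iff by blast
  ultimately show ?thesis
    using sum_degree_level_diff[OF a, of id] finite_vertices by (simp add: of_nat_diff)
qed

lemma sum_degree_gdist:
  assumes "a \<in> V"
  shows "(\<Sum>b\<in>V. int (degree V E b) * int (gdist V E a b))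
    = 2 * (\<Sum>b\<in>V. int (gdist V E a b)) - (int (card V) - 1)"
proof -
  have "2 * (\<Sum>b\<in>V. int (degree V E b) * int (gdist V E a b)) + (\<Sum>b\<in>V. int (degree V E b))
      = (\<Sum>b\<in>V. int (degree V E b) * (2 * int (gdist V E a b) + 1))"
    by (simp add: algebra_simps sum.distrib sum_distrib_left)
  also have "\<dots> = (\<Sum>b\<in>V - {a}. 4 * int (gdist V E a b))"
    using sum_degree_level_diff[OF assms, of "\<lambda>x. x\<^sup>2"] by (simp add: power2_eq_square algebra_simps)
  also have "\<dots> = 4 * (\<Sum>b\<in>V. int (gdist V E a b))"
    using finite_vertices assms gdist_self[OF assms] by (simp add: sum.remove sum_distrib_left)
  finally have "2 * (\<Sum>b\<in>V. int (degree V E b) * int (gdist V E a b))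
      = 2 * (2 * (\<Sum>b\<in>V. int (gdist V E a b)) - (int (card V) - 1))"
    using sum_degree by (simp add: algebra_simps)
  then show ?thesis
    by simp
qed

lemma sum_degree_row_sum:
  "(\<Sum>a\<in>V. int (degree V E a) * (\<Sum>b\<in>V. int (gdist V E a b)))
    = 2 * (\<Sum>a\<in>V. \<Sum>b\<in>V. int (gdist V E a b)) - int (card V) * (int (card V) - 1)"
proof -
  have "(\<Sum>a\<in>V. int (degree V E a) * (\<Sum>b\<in>V. int (gdist V E a b)))
      = (\<Sum>a\<in>V. \<Sum>b\<in>V. int (degree V E a) * int (gdist V E b a))"
    using gdist_sym[of E V, OF edge_sym] by (simp add: sum_distrib_left)
  also have "\<dots> = (\<Sum>b\<in>V. \<Sum>a\<in>V. int (degree V E a) * int (gdist V E b a))"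
    by (rule sum.swap)
  also have "\<dots> = (\<Sum>b\<in>V. 2 * (\<Sum>a\<in>V. int (gdist V E b a)) - (int (card V) - 1))"
    using sum_degree_gdist by (intro sum.cong) auto
  finally show ?thesis
    by (simp add: sum_subtractf sum_distrib_left)
qed

end

theorem corollary2p3:
  fixes V :: "'a set" and E :: "'a \<Rightarrow> 'a \<Rightarrow> bool"
  assumes "is_tree V E"
  defines "n \<equiv> card V"
  shows "(\<Sum>a\<in>V. \<Sum>b\<in>V. int (degree V E a) * int (gdist V E a b) * int (degree V E b))
         = 4 * (\<Sum>a\<in>V. \<Sum>b\<in>V. int (gdist V E a b)) - 2 * (int n - 1) * (2 * int n - 1)"
proof -
  interpret tree V E
    using assms(1) by unfold_locales
  let ?deg = "\<lambda>a. int (degree V E a)" and ?D = "\<lambda>a b. int (gdist V E a b)"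
  have "(\<Sum>a\<in>V. \<Sum>b\<in>V. ?deg a * ?D a b * ?deg b) = (\<Sum>a\<in>V. ?deg a * (\<Sum>b\<in>V. ?deg b * ?D a b))"
    by (simp add: sum_distrib_left mult_ac)
  also have "\<dots> = (\<Sum>a\<in>V. ?deg a * (2 * (\<Sum>b\<in>V. ?D a b) - (int n - 1)))"
    by (intro sum.cong refl) (simp add: sum_degree_gdist n_def)
  also have "\<dots> = 2 * (\<Sum>a\<in>V. ?deg a * (\<Sum>b\<in>V. ?D a b)) - (int n - 1) * (\<Sum>a\<in>V. ?deg a)"
    by (simp add: right_diff_distrib sum_subtractf sum_distrib_left mult_ac)
  finally show ?thesis
    using sum_degree_row_sum sum_degree by (simp add: n_def algebra_simps)
qed

end
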